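(* Let $U$ be a connected graph containing exactly one cycle, where the cycle has an even number of vertices, exactly one vertex of the cycle has degree $3$ in $U$, and all other vertices of the cycle have degree $2$ in $U$. Let $\Delta$ be the distance squared matrix of $U$. If $U$ has at least one vertex of degree $2$ that is not on the cycle, then $i_0(\Delta)\ge 1$.
   Context: For a connected graph with vertices $1,\dots,n$, the distance squared matrix is the matrix with $(i,j)$ entry $d_{ij}^2$, where $d_{ij}$ is the graph distance between $i$ and $j$. For a real symmetric matrix $M$, $i_0(M)$ denotes the multiplicity of $0$ as an eigenvalue of $M$. *)

theory Defs
  imports "Jordan_Normal_Form.Char_Poly"
begin

definition simple_graph :: "nat \<Rightarrow> (nat \<Rightarrow> nat \<Rightarrow> bool) \<Rightarrow> bool" where
  "simple_graph n E \<longleftrightarrow> (\<forall>u v. E u v \<longrightarrow> u < n \<and> v < n) \<and> (\<forall>u v. E u v \<longrightarrow> E v u) \<and> (\<forall>u. \<not> E u u)"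

fun walk :: "(nat \<Rightarrow> nat \<Rightarrow> bool) \<Rightarrow> nat list \<Rightarrow> bool" where
  "walk E [] = True"
| "walk E [x] = True"
| "walk E (x # y # xs) = (E x y \<and> walk E (y # xs))"

definition walk_of_len :: "(nat \<Rightarrow> nat \<Rightarrow> bool) \<Rightarrow> nat \<Rightarrow> nat \<Rightarrow> nat \<Rightarrow> nat list \<Rightarrow> bool" where
  "walk_of_len E u v k xs \<longleftrightarrow> walk E xs \<and> xs \<noteq> [] \<and> hd xs = u \<and> last xs = v \<and> length xs = Suc k"

definition connected_graph :: "nat \<Rightarrow> (nat \<Rightarrow> nat \<Rightarrow> bool) \<Rightarrow> bool" where
  "connected_graph n E \<longleftrightarrow> (\<forall>u<n. \<forall>v<n. \<exists>k xs. walk_of_len E u v k xs)"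

definition gdist :: "(nat \<Rightarrow> nat \<Rightarrow> bool) \<Rightarrow> nat \<Rightarrow> nat \<Rightarrow> nat" where
  "gdist E u v = (LEAST k. \<exists>xs. walk_of_len E u v k xs)"

definition degree :: "nat \<Rightarrow> (nat \<Rightarrow> nat \<Rightarrow> bool) \<Rightarrow> nat \<Rightarrow> nat" where
  "degree n E v = card {w. w < n \<and> E v w}"

definition is_cycle :: "nat \<Rightarrow> (nat \<Rightarrow> nat \<Rightarrow> bool) \<Rightarrow> nat list \<Rightarrow> bool" where
  "is_cycle n E cs \<longleftrightarrow> length cs \<ge> 3 \<and> distinct cs \<and> set cs \<subseteq> {0..<n} \<and> walk E cs \<and> E (last cs) (hd cs)"

text \<open>The edge set of a cycle; two cycle lists represent the same cycle (subgraph) iff their edge sets agree.\<close>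
definition cycle_edges :: "nat list \<Rightarrow> nat set set" where
  "cycle_edges cs = {{cs ! i, cs ! ((i + 1) mod length cs)} | i. i < length cs}"

definition dist_sq_matrix :: "nat \<Rightarrow> (nat \<Rightarrow> nat \<Rightarrow> bool) \<Rightarrow> real mat" where
  "dist_sq_matrix n E = mat n n (\<lambda>(i, j). (real (gdist E i j))^2)"

text \<open>Multiplicity of 0 as an eigenvalue (algebraic multiplicity; equals geometric for symmetric matrices).\<close>
definition i0 :: "real mat \<Rightarrow> nat" where
  "i0 M = order 0 (char_poly M)"

end

theory Submission
  imports Defs
begin

text \<open>
  The distance squared matrix has an explicit kernel vector. Let the cycle have length \<open>2k\<close>,
  let \<open>v\<close> be its vertex of degree 3, \<open>t\<close> the neighbour of \<open>v\<close> off the cycle, \<open>u\<close> the vertex of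
  the cycle opposite to \<open>v\<close>, and \<open>w\<close> a vertex of degree 2 off the cycle, with neighbours
  \<open>a\<close> and \<open>b\<close>. Since \<open>v\<close> separates the cycle from the rest of the graph, every vertex \<open>x\<close>
  satisfies \<open>d(x,u)\<^sup>2 + k d(x,t)\<^sup>2 - (k+1) d(x,v)\<^sup>2 = k(k+1)\<close>; since the graph has only
  one cycle, \<open>w\<close> separates \<open>a\<close> from \<open>b\<close>, so \<open>d(x,a)\<^sup>2 - 2 d(x,w)\<^sup>2 + d(x,b)\<^sup>2 = 2\<close>.
  Hence \<open>2 (e\<^sub>u + k e\<^sub>t - (k+1) e\<^sub>v) - k(k+1) (e\<^sub>a - 2 e\<^sub>w + e\<^sub>b)\<close> is in the kernel.
\<close>

lemma walk_Cons: "walk E (x # xs) \<longleftrightarrow> walk E xs \<and> (xs \<noteq> [] \<longrightarrow> E x (hd xs))"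
  by (cases xs) auto

lemma walk_append:
  "walk E (xs @ ys) \<longleftrightarrow> walk E xs \<and> walk E ys \<and> (xs \<noteq> [] \<and> ys \<noteq> [] \<longrightarrow> E (last xs) (hd ys))"
  by (induction xs) (auto simp: walk_Cons)

lemma walk_rev: "(\<And>x y. E x y \<Longrightarrow> E y x) \<Longrightarrow> walk E xs \<Longrightarrow> walk E (rev xs)"
  by (induction xs) (auto simp: walk_Cons walk_append hd_rev last_rev)

lemma walk_take: "walk E xs \<Longrightarrow> walk E (take m xs)"
  using walk_append[of E "take m xs" "drop m xs"] by simp

lemma walk_nth: "walk E xs \<Longrightarrow> Suc i < length xs \<Longrightarrow> E (xs ! i) (xs ! Suc i)"
proof (induction xs arbitrary: i)
  case (Cons x xs)
  then show ?case by (cases i) (auto simp: walk_Cons hd_conv_nth)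
qed simp

lemma walk_to_path:
  assumes "walk E xs" "xs \<noteq> []"
  shows "\<exists>ys. walk E ys \<and> distinct ys \<and> ys \<noteq> [] \<and> hd ys = hd xs \<and> last ys = last xs \<and> set ys \<subseteq> set xs"
  using assms
proof (induction "length xs" arbitrary: xs rule: less_induct)
  case less
  show ?case
  proof (cases "distinct xs")
    case False
    then obtain us y vs ws where xs: "xs = us @ [y] @ vs @ [y] @ ws"
      using not_distinct_decomp by blast
    let ?xs' = "us @ [y] @ ws"
    have "walk E ?xs'" "hd ?xs' = hd xs" "last ?xs' = last xs" "set ?xs' \<subseteq> set xs"
      using less.prems(1) unfolding xs by (auto simp: walk_append walk_Cons hd_append)
    moreover have "length ?xs' < length xs" unfolding xs by simp
    ultimately show ?thesis using less.hyps[of ?xs'] by fastforce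
  qed (use less.prems in blast)
qed

lemma walk_of_len_rev:
  "(\<And>x y. E x y \<Longrightarrow> E y x) \<Longrightarrow> walk_of_len E u v k xs \<Longrightarrow> walk_of_len E v u k (rev xs)"
  unfolding walk_of_len_def by (auto simp: walk_rev hd_rev last_rev)

lemma walk_of_len_append:
  "walk_of_len E u v k xs \<Longrightarrow> walk_of_len E v w l ys \<Longrightarrow> walk_of_len E u w (k + l) (xs @ tl ys)"
  by (cases ys) (auto simp: walk_of_len_def walk_Cons walk_append)

lemma gdist_le: "walk_of_len E u v k xs \<Longrightarrow> gdist E u v \<le> k"
  unfolding gdist_def by (rule Least_le) blast

lemma gdist_shortest_walk: "walk_of_len E u v k xs \<Longrightarrow> \<exists>ys. walk_of_len E u v (gdist E u v) ys"
  unfolding gdist_def by (rule LeastI_ex) blast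

lemma gdist_self [simp]: "gdist E u u = 0"
  using gdist_le[of E u u 0 "[u]"] by (simp add: walk_of_len_def)

lemma gdist_walk_vertex:
  assumes "walk_of_len E x y k xs" "z \<in> set xs" "z \<noteq> y"
  shows "gdist E x z < k"
proof -
  obtain i where i: "i < length xs" "xs ! i = z" using assms(2) by (auto simp: in_set_conv_nth)
  have len: "length xs = Suc k" using assms(1) unfolding walk_of_len_def by simp
  have "i \<noteq> k" using assms(1,3) i len unfolding walk_of_len_def by (auto simp: last_conv_nth)
  with i len have "i < k" by simp
  with assms(1) i len have "walk_of_len E x z i (take (Suc i) xs)"
    unfolding walk_of_len_def by (auto simp: walk_take hd_conv_nth last_conv_nth min_def)
  with \<open>i < k\<close> show ?thesis using gdist_le by fastforce
qed

lemma Union_cycle_edges: "\<Union> (cycle_edges cs) = set cs"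
proof
  have "cs ! (Suc i mod length cs) \<in> set cs" if "i < length cs" for i
    using that by (intro nth_mem mod_less_divisor) linarith
  then show "\<Union> (cycle_edges cs) \<subseteq> set cs" unfolding cycle_edges_def by auto
  show "set cs \<subseteq> \<Union> (cycle_edges cs)"
  proof
    fix z assume "z \<in> set cs"
    then obtain i where "i < length cs" "z = cs ! i" by (auto simp: in_set_conv_nth)
    then show "z \<in> \<Union> (cycle_edges cs)" unfolding cycle_edges_def by blast
  qed
qed

lemma sum_mult_point_combination:
  fixes g :: "nat \<Rightarrow> 'a::comm_semiring_1"
  assumes "\<forall>(c, p) \<in> set cps. p < m"
  shows "(\<Sum>j<m. g j * (\<Sum>(c, p) \<leftarrow> cps. if j = p then c else 0)) = (\<Sum>(c, p) \<leftarrow> cps. c * g p)"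
  using assms
proof (induction cps)
  case (Cons cp cps)
  obtain c p where cp: "cp = (c, p)" by fastforce
  have "(\<Sum>j<m. g j * (if j = p then c else 0)) = (\<Sum>j<m. if j = p then c * g p else 0)"
    by (intro sum.cong) (auto simp: mult.commute)
  also have "\<dots> = c * g p" using Cons.prems cp by simp
  finally have "(\<Sum>j<m. g j * (if j = p then c else 0)) = c * g p" .
  with Cons cp show ?case by (simp add: distrib_left sum.distrib)
qed simp

lemma mult_mat_vec_point_combination:
  fixes M :: "'a::comm_semiring_1 mat"
  assumes "i < dim_row M" "\<forall>(c, p) \<in> set cps. p < dim_col M"
  shows "(M *\<^sub>v vec (dim_col M) (\<lambda>j. \<Sum>(c, p) \<leftarrow> cps. if j = p then c else 0)) $ i
    = (\<Sum>(c, p) \<leftarrow> cps. c * M $$ (i, p))"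
  using assms sum_mult_point_combination[OF assms(2), of "\<lambda>j. M $$ (i, j)"]
  by (simp add: scalar_prod_def lessThan_atLeast0)

lemma i0_ge_1_if_singular:
  fixes M :: "real mat"
  assumes "M \<in> carrier_mat n n" "y \<in> carrier_vec n" "y \<noteq> 0\<^sub>v n" "M *\<^sub>v y = 0\<^sub>v n"
  shows "1 \<le> i0 M"
proof -
  have "eigenvector M y 0" unfolding eigenvector_def using assms by auto
  then have "eigenvalue M 0" unfolding eigenvalue_def by blast
  then have "poly (char_poly M) 0 = 0" using eigenvalue_root_char_poly[OF assms(1)] by simp
  moreover have "char_poly M \<noteq> 0" using degree_monic_char_poly[OF assms(1)] by auto
  ultimately show ?thesis unfolding i0_def by (simp add: order_root Suc_le_eq)
qed

locale connected_simple_graph =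
  fixes n :: nat and E :: "nat \<Rightarrow> nat \<Rightarrow> bool"
  assumes simple: "simple_graph n E" and connected: "connected_graph n E"
begin

definition neighbours :: "nat \<Rightarrow> nat set" where
  "neighbours x = {y. E x y}"

definition separates :: "nat \<Rightarrow> nat \<Rightarrow> nat \<Rightarrow> bool" where
  "separates w a b \<longleftrightarrow> (\<forall>k xs. walk_of_len E a b k xs \<longrightarrow> w \<in> set xs)"

lemma edge_sym: "E x y \<Longrightarrow> E y x"
  using simple unfolding simple_graph_def by blast

lemma edge_irrefl: "\<not> E x x"
  using simple unfolding simple_graph_def by blast

lemma edge_less: "E x y \<Longrightarrow> x < n \<and> y < n"
  using simple unfolding simple_graph_def by blast

lemma finite_neighbours: "finite (neighbours x)"
  by (rule finite_subset[of _ "{..<n}"]) (auto simp: neighbours_def dest: edge_less)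

lemma degree_eq_card_neighbours: "degree n E x = card (neighbours x)"
  unfolding degree_def neighbours_def by (metis edge_less)

lemma walk_vertices_less: "walk E xs \<Longrightarrow> 2 \<le> length xs \<Longrightarrow> set xs \<subseteq> {..<n}"
proof (induction xs)
  case (Cons x xs)
  then obtain y ys where xs: "xs = y # ys" by (cases xs) auto
  with Cons.prems have "E x y" by simp
  with Cons xs show ?case using edge_less by (cases ys) auto
qed simp

lemma shortest_walk:
  assumes "x < n" "y < n"
  obtains xs where "walk_of_len E x y (gdist E x y) xs"
  using connected assms gdist_shortest_walk unfolding connected_graph_def by meson

lemma gdist_eq_0_iff:
  assumes "x < n" "y < n"
  shows "gdist E x y = 0 \<longleftrightarrow> x = y"
proof
  assume "gdist E x y = 0"
  moreover obtain xs where "walk_of_len E x y (gdist E x y) xs" using shortest_walk assms .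
  ultimately show "x = y" by (auto simp: walk_of_len_def length_Suc_conv)
qed simp

lemma gdist_sym: "x < n \<Longrightarrow> y < n \<Longrightarrow> gdist E x y = gdist E y x"
  by (metis shortest_walk walk_of_len_rev[of E, OF edge_sym] gdist_le le_antisym)

lemma gdist_triangle: "x < n \<Longrightarrow> y < n \<Longrightarrow> z < n \<Longrightarrow> gdist E x z \<le> gdist E x y + gdist E y z"
  by (metis shortest_walk walk_of_len_append gdist_le)

lemma gdist_edge: "E x y \<Longrightarrow> gdist E x y = 1"
proof -
  assume xy: "E x y"
  then have "gdist E x y \<le> 1" using gdist_le[of E x y 1 "[x, y]"] by (simp add: walk_of_len_def)
  moreover have "gdist E x y \<noteq> 0" using xy edge_irrefl edge_less gdist_eq_0_iff by metis
  ultimately show ?thesis by simp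
qed

lemma gdist_edge_triangle: "E y z \<Longrightarrow> x < n \<Longrightarrow> gdist E x z \<le> gdist E x y + 1"
  using gdist_triangle gdist_edge edge_less by metis

lemma gdist_last_edge:
  assumes "x < n" "y < n" "x \<noteq> y"
  obtains z where "E z y" "gdist E x z + 1 = gdist E x y"
proof -
  obtain xs where xs: "walk_of_len E x y (gdist E x y) xs" using shortest_walk assms(1,2) .
  then obtain ys where ys: "xs = ys @ [y]"
    unfolding walk_of_len_def by (metis append_butlast_last_id)
  have "gdist E x y \<noteq> 0" using assms gdist_eq_0_iff by blast
  moreover have len: "length ys = gdist E x y" using xs ys by (simp add: walk_of_len_def)
  ultimately have "ys \<noteq> []" by auto
  then have "walk_of_len E x (last ys) (gdist E x y - 1) ys" and edge: "E (last ys) y"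
    using xs len \<open>gdist E x y \<noteq> 0\<close> unfolding ys walk_of_len_def
    by (auto simp: walk_append hd_append)
  then have "gdist E x (last ys) + 1 \<le> gdist E x y"
    using gdist_le \<open>gdist E x y \<noteq> 0\<close> by fastforce
  moreover have "gdist E x y \<le> gdist E x (last ys) + 1"
    using gdist_edge_triangle[OF edge assms(1)] .
  ultimately show ?thesis using that edge by simp
qed

lemma gdist_through_cut_vertex:
  assumes closed: "\<And>y z. y \<in> S \<Longrightarrow> y \<noteq> u \<Longrightarrow> E y z \<Longrightarrow> z \<in> S"
    and x: "x < n" "x \<notin> S" and "u < n" "y \<in> S" "y < n"
  shows "gdist E x y = gdist E x u + gdist E u y"
  using assms(5,6)
proof (induction "gdist E x y" arbitrary: y rule: less_induct)
  case less
  show ?case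
  proof (cases "y = u")
    case False
    obtain z where z: "E z y" "gdist E x z + 1 = gdist E x y"
      using gdist_last_edge x(1) less.prems x(2) by metis
    have "z \<in> S" using closed[OF less.prems(1) False edge_sym[OF z(1)]] .
    then have "gdist E x z = gdist E x u + gdist E u z"
      using less.hyps z edge_less by force
    moreover have "gdist E u y \<le> gdist E u z + 1" using gdist_edge_triangle z(1) \<open>u < n\<close> .
    moreover have "gdist E x y \<le> gdist E x u + gdist E u y"
      using gdist_triangle x(1) \<open>u < n\<close> less.prems(2) .
    ultimately show ?thesis using z(2) by linarith
  qed simp
qed

lemma separates_sym: "separates w a b \<Longrightarrow> separates w b a"
  unfolding separates_def by (metis walk_of_len_rev[of E, OF edge_sym] set_rev)

lemma gdist_across_separator:
  assumes sep: "separates w a b" and "E w a" "E w b" "x < n"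
    and closer: "gdist E x a + 1 = gdist E x w"
  shows "gdist E x b = gdist E x w + 1"
proof (rule ccontr)
  assume "gdist E x b \<noteq> gdist E x w + 1"
  then have b_le: "gdist E x b \<le> gdist E x w"
    using gdist_edge_triangle[OF \<open>E w b\<close> \<open>x < n\<close>] by simp
  obtain xa where xa: "walk_of_len E x a (gdist E x a) xa"
    using shortest_walk \<open>x < n\<close> \<open>E w a\<close> edge_less by metis
  obtain xb where xb: "walk_of_len E x b (gdist E x b) xb"
    using shortest_walk \<open>x < n\<close> \<open>E w b\<close> edge_less by metis
  have "w \<notin> set xa" using gdist_walk_vertex[OF xa] closer edge_irrefl \<open>E w a\<close> by fastforce
  moreover have "w \<notin> set xb" using gdist_walk_vertex[OF xb] b_le edge_irrefl \<open>E w b\<close> by fastforce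
  moreover have "set (tl xb) \<subseteq> set xb" by (cases xb) auto
  ultimately have "w \<notin> set (rev xa @ tl xb)" by auto
  moreover have "walk_of_len E a b (gdist E x a + gdist E x b) (rev xa @ tl xb)"
    using walk_of_len_append[OF walk_of_len_rev[of E, OF edge_sym xa] xb] .
  ultimately show False using sep unfolding separates_def by blast
qed

lemma gdist_sq_second_difference:
  assumes sep: "separates w a b" and nbrs: "neighbours w = {a, b}" and "x < n"
  shows "real (gdist E x a)^2 - 2 * real (gdist E x w)^2 + real (gdist E x b)^2 = 2"
proof -
  have edges: "E w a" "E w b" using nbrs unfolding neighbours_def by blast+
  have shift: "real p^2 - 2 * real q^2 + real r^2 = 2"
    if "p + 1 = q \<and> r = q + 1 \<or> r + 1 = q \<and> p = q + 1" for p q r :: nat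
  proof -
    from that consider "real q = real p + 1" "real r = real p + 2"
      | "real q = real r + 1" "real p = real r + 2" by fastforce
    then show ?thesis by cases (simp_all add: power2_eq_square algebra_simps)
  qed
  show ?thesis
  proof (cases "x = w")
    case True
    then show ?thesis using edges gdist_edge by simp
  next
    case False
    obtain z where z: "E z w" "gdist E x z + 1 = gdist E x w"
      using gdist_last_edge \<open>x < n\<close> edges edge_less False by metis
    then have "z = a \<or> z = b" using nbrs edge_sym unfolding neighbours_def by blast
    then show ?thesis
      using shift z(2) gdist_across_separator[OF sep edges \<open>x < n\<close>]
        gdist_across_separator[OF separates_sym[OF sep] edges(2,1) \<open>x < n\<close>]
      by blast
  qed
qed

end

locale unicyclic_graph = connected_simple_graph +
  fixes cs :: "nat list"
  assumes cycle: "is_cycle n E cs"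
    and unique_cycle: "\<forall>cs'. is_cycle n E cs' \<longrightarrow> cycle_edges cs' = cycle_edges cs"
begin

text \<open>A walk from \<open>a\<close> to \<open>b\<close> avoiding \<open>w\<close> would close up, through \<open>w\<close>, to a second cycle.\<close>

lemma separates_off_cycle:
  assumes "w \<notin> set cs" "E w a" "E w b" "a \<noteq> b"
  shows "separates w a b"
proof (rule ccontr)
  assume "\<not> separates w a b"
  then obtain k xs where "walk_of_len E a b k xs" "w \<notin> set xs"
    unfolding separates_def by blast
  then obtain ys where ys: "walk E ys" "distinct ys" "ys \<noteq> []" "hd ys = a" "last ys = b"
    and "w \<notin> set ys"
    using walk_to_path[of E xs] unfolding walk_of_len_def by blast
  have "2 \<le> length ys"
    using ys(3-5) \<open>a \<noteq> b\<close> by (cases ys) (auto simp: Suc_le_eq)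
  have "is_cycle n E (ys @ [w])"
    unfolding is_cycle_def
  proof (intro conjI)
    show "3 \<le> length (ys @ [w])" using \<open>2 \<le> length ys\<close> by simp
    show "distinct (ys @ [w])" using ys(2) \<open>w \<notin> set ys\<close> by simp
    show "set (ys @ [w]) \<subseteq> {0..<n}"
      using walk_vertices_less[OF ys(1) \<open>2 \<le> length ys\<close>] edge_less[OF \<open>E w a\<close>] by auto
    show "walk E (ys @ [w])" using ys(1,3,5) edge_sym[OF \<open>E w b\<close>] by (simp add: walk_append)
    show "E (last (ys @ [w])) (hd (ys @ [w]))" using ys(3,4) \<open>E w a\<close> by simp
  qed
  then have "cycle_edges (ys @ [w]) = cycle_edges cs" using unique_cycle by blast
  then have "set (ys @ [w]) = set cs" by (metis Union_cycle_edges)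
  then show False using \<open>w \<notin> set cs\<close> by auto
qed

end

locale unicyclic_graph_hub = unicyclic_graph +
  fixes h :: nat
  assumes hub_index: "h < length cs"
    and hub_degree: "degree n E (cs ! h) = 3"
    and cycle_degree: "\<And>y. y \<in> set cs \<Longrightarrow> y \<noteq> cs ! h \<Longrightarrow> degree n E y = 2"
begin

definition cyc :: "nat \<Rightarrow> nat" where
  "cyc m = cs ! ((h + m) mod length cs)"

definition cycle_dist :: "nat \<Rightarrow> nat" where
  "cycle_dist m = min m (length cs - m)"

lemma length_cycle: "3 \<le> length cs"
  using cycle unfolding is_cycle_def by simp

lemma length_cycle_pos: "0 < length cs"
  using length_cycle by linarith

lemma cyc_0: "cyc 0 = cs ! h"
  unfolding cyc_def using hub_index by simp

lemma cyc_eq_iff: "cyc x = cyc y \<longleftrightarrow> x mod length cs = y mod length cs"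
proof -
  have "cyc x = cyc y \<longleftrightarrow> (h + x) mod length cs = (h + y) mod length cs"
    unfolding cyc_def using cycle length_cycle_pos unfolding is_cycle_def
    by (simp add: nth_eq_iff_index_eq)
  also have "\<dots> \<longleftrightarrow> x mod length cs = y mod length cs" by (simp add: nat_mod_eq_iff)
  finally show ?thesis .
qed

lemma cyc_length: "cyc (length cs) = cyc 0"
  using cyc_eq_iff by simp

lemma cyc_in_cycle: "cyc m \<in> set cs"
  unfolding cyc_def using length_cycle_pos by (intro nth_mem) simp

lemma cyc_less: "cyc m < n"
  using cyc_in_cycle[of m] cycle unfolding is_cycle_def by auto

lemma cycle_vertex_cyc:
  assumes "y \<in> set cs"
  obtains m where "m < length cs" "y = cyc m"
proof -
  obtain i where i: "i < length cs" "y = cs ! i" using assms by (auto simp: in_set_conv_nth)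
  let ?m = "(i + length cs - h) mod length cs"
  have "(h + ?m) mod length cs = i"
    using i hub_index by (simp add: mod_add_right_eq)
  then show ?thesis using that[of ?m] i length_cycle_pos unfolding cyc_def by simp
qed

lemma cyc_edge: "E (cyc m) (cyc (Suc m))"
proof -
  let ?i = "(h + m) mod length cs"
  have "E (cs ! ?i) (cs ! ((?i + 1) mod length cs))"
  proof (cases "?i + 1 < length cs")
    case True
    then show ?thesis using walk_nth[of E cs ?i] cycle unfolding is_cycle_def by simp
  next
    case False
    moreover have "?i < length cs" using mod_less_divisor[OF length_cycle_pos] .
    ultimately have "?i = length cs - 1" by linarith
    then show ?thesis using cycle length_cycle_pos unfolding is_cycle_def
      by (simp add: last_conv_nth hd_conv_nth)
  qed
  then show ?thesis unfolding cyc_def by (simp add: mod_Suc_eq)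
qed

lemma hub_cycle_edges: "E (cyc 0) (cyc 1)" "E (cyc 0) (cyc (length cs - 1))"
  using cyc_edge[of 0] cyc_edge[of "length cs - 1"] cyc_length length_cycle_pos edge_sym
  by simp_all

lemma neighbours_cyc:
  assumes "0 < m" "m < length cs"
  shows "neighbours (cyc m) = {cyc (Suc m), cyc (m - 1)}"
proof -
  have "cyc m \<noteq> cyc 0" using cyc_eq_iff assms by simp
  then have "card (neighbours (cyc m)) = 2"
    using cycle_degree cyc_in_cycle cyc_0 degree_eq_card_neighbours by metis
  moreover have "{cyc (Suc m), cyc (m - 1)} \<subseteq> neighbours (cyc m)"
    using cyc_edge[of m] cyc_edge[of "m - 1"] assms edge_sym unfolding neighbours_def by auto
  moreover have "cyc (Suc m) \<noteq> cyc (m - 1)"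
    using assms length_cycle cyc_eq_iff by (cases "Suc m = length cs") auto
  ultimately show ?thesis
    using card_subset_eq[OF finite_neighbours] by (metis card_2_iff)
qed

lemma cycle_closed:
  assumes "y \<in> set cs" "y \<noteq> cyc 0" "E y z"
  shows "z \<in> set cs"
proof -
  obtain m where m: "m < length cs" "y = cyc m" using cycle_vertex_cyc assms(1) .
  with assms(2) have "0 < m" by (cases m) auto
  with m assms(3) have "z \<in> {cyc (Suc m), cyc (m - 1)}"
    using neighbours_cyc unfolding neighbours_def by blast
  then show ?thesis using cyc_in_cycle by auto
qed

lemma gdist_via_hub:
  assumes "x < n" "x \<notin> set cs" "y \<in> set cs"
  shows "gdist E x y = gdist E x (cyc 0) + gdist E (cyc 0) y"
proof -
  obtain m where "y = cyc m" using cycle_vertex_cyc assms(3) .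
  then show ?thesis
    using gdist_through_cut_vertex[OF cycle_closed assms(1,2) cyc_less assms(3)] cyc_less by simp
qed

lemma gdist_cyc_le: "gdist E (cyc i) (cyc (i + m)) \<le> m"
proof (induction m)
  case (Suc m)
  then show ?case using gdist_edge_triangle[OF cyc_edge[of "i + m"] cyc_less[of i]] by simp
qed simp

lemma cycle_dist_le_gdist_hub:
  "m < length cs \<Longrightarrow> cycle_dist m \<le> gdist E (cyc 0) (cyc m)"
proof (induction "gdist E (cyc 0) (cyc m)" arbitrary: m rule: less_induct)
  case less
  show ?case
  proof (cases "m = 0")
    case False
    then have "cyc m \<noteq> cyc 0" using cyc_eq_iff less.prems by simp
    then obtain y where y: "E y (cyc m)" "gdist E (cyc 0) y + 1 = gdist E (cyc 0) (cyc m)"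
      using gdist_last_edge cyc_less by metis
    then have "y \<in> neighbours (cyc m)" using edge_sym unfolding neighbours_def by blast
    then have "y = cyc (Suc m) \<or> y = cyc (m - 1)"
      using neighbours_cyc False less.prems by auto
    then obtain m' where m': "m' < length cs" "y = cyc m'"
      and step: "cycle_dist m \<le> cycle_dist m' + 1"
    proof
      assume "y = cyc (Suc m)"
      moreover have "cycle_dist m \<le> cycle_dist (Suc m mod length cs) + 1"
        using less.prems unfolding cycle_dist_def by (cases "Suc m < length cs") auto
      ultimately show thesis
        using that[of "Suc m mod length cs"] cyc_eq_iff length_cycle_pos by simp
    next
      assume "y = cyc (m - 1)"
      moreover have "cycle_dist m \<le> cycle_dist (m - 1) + 1"
        using less.prems unfolding cycle_dist_def by auto
      ultimately show thesis using that[of "m - 1"] less.prems by simp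
    qed
    have "cycle_dist m' \<le> gdist E (cyc 0) y"
      using less.hyps[of m'] m' y(2) by simp
    then show ?thesis using step y(2) by simp
  qed (simp add: cycle_dist_def)
qed

lemma gdist_hub_cyc:
  assumes "m < length cs"
  shows "gdist E (cyc 0) (cyc m) = cycle_dist m"
proof (rule antisym)
  have "gdist E (cyc m) (cyc (m + (length cs - m))) \<le> length cs - m" by (rule gdist_cyc_le)
  then have "gdist E (cyc 0) (cyc m) \<le> length cs - m"
    using assms cyc_length gdist_sym[OF cyc_less cyc_less, of m 0] by simp
  then show "gdist E (cyc 0) (cyc m) \<le> cycle_dist m"
    using gdist_cyc_le[of 0 m] unfolding cycle_dist_def by simp
qed (rule cycle_dist_le_gdist_hub[OF assms])

lemma hub_neighbour_on_cycle:
  assumes "E (cyc 0) y" "y \<in> set cs"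
  shows "y = cyc 1 \<or> y = cyc (length cs - 1)"
proof -
  obtain m where m: "m < length cs" "y = cyc m" using cycle_vertex_cyc assms(2) .
  have "m \<noteq> 0" using m assms(1) edge_irrefl by metis
  then have "cyc 0 \<in> {cyc (Suc m), cyc (m - 1)}"
    using neighbours_cyc m assms(1) edge_sym unfolding neighbours_def by auto
  then have "m = 1 \<or> m = length cs - 1"
    using cyc_eq_iff m \<open>m \<noteq> 0\<close> by (auto simp: mod_Suc split: if_splits)
  then show ?thesis using m by auto
qed

lemma ex_hub_off_cycle_neighbour: "\<exists>t. E (cyc 0) t \<and> t \<notin> set cs"
proof (rule ccontr)
  assume "\<nexists>t. E (cyc 0) t \<and> t \<notin> set cs"
  then have "neighbours (cyc 0) \<subseteq> {cyc 1, cyc (length cs - 1)}"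
    using hub_neighbour_on_cycle unfolding neighbours_def by blast
  then have "card (neighbours (cyc 0)) \<le> card {cyc 1, cyc (length cs - 1)}"
    by (simp add: card_mono)
  also have "\<dots> \<le> 2" by (simp add: card_insert_if)
  finally show False using hub_degree cyc_0 degree_eq_card_neighbours by simp
qed

lemma hub_off_cycle_neighbour_unique:
  assumes "E (cyc 0) t" "t \<notin> set cs" "E (cyc 0) t'" "t' \<notin> set cs"
  shows "t' = t"
proof -
  have sub: "{cyc 1, cyc (length cs - 1), t} \<subseteq> neighbours (cyc 0)"
    using hub_cycle_edges assms(1) unfolding neighbours_def by auto
  have "cyc 1 \<noteq> cyc (length cs - 1)" using cyc_eq_iff[of 1 "length cs - 1"] length_cycle by simp
  moreover have "t \<noteq> cyc 1" "t \<noteq> cyc (length cs - 1)" using assms(2) cyc_in_cycle by metis+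
  ultimately have "card {cyc 1, cyc (length cs - 1), t} = card (neighbours (cyc 0))"
    using hub_degree cyc_0 degree_eq_card_neighbours by simp
  then have "neighbours (cyc 0) = {cyc 1, cyc (length cs - 1), t}"
    using card_subset_eq[OF finite_neighbours sub] by simp
  then have "t' \<in> {cyc 1, cyc (length cs - 1), t}" using assms(3) unfolding neighbours_def by blast
  then show ?thesis using assms(4) cyc_in_cycle by blast
qed

lemma gdist_off_cycle_hub:
  assumes "E (cyc 0) t" "t \<notin> set cs" "x < n" "x \<notin> set cs"
  shows "gdist E x (cyc 0) = gdist E x t + 1"
proof -
  have "x \<noteq> cyc 0" using assms(4) cyc_in_cycle by metis
  then obtain z where z: "E z (cyc 0)" "gdist E x z + 1 = gdist E x (cyc 0)"
    using gdist_last_edge assms(3) cyc_less by metis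
  have "z \<notin> set cs"
  proof
    assume "z \<in> set cs"
    then show False using gdist_via_hub[OF assms(3,4)] z(2) by fastforce
  qed
  then have "z = t" using hub_off_cycle_neighbour_unique assms(1,2) edge_sym z(1) by blast
  then show ?thesis using z(2) by simp
qed

lemma cyc_antipode_ne: "u \<notin> set cs \<or> u = cyc 0 \<Longrightarrow> cyc (length cs div 2) \<noteq> u"
  using cyc_eq_iff[of "length cs div 2" 0] length_cycle cyc_in_cycle by auto

lemma gdist_cyc_antipode:
  assumes "even (length cs)" "m < length cs"
  defines "k \<equiv> length cs div 2"
  shows "gdist E (cyc m) (cyc k) = k - cycle_dist m"
proof -
  have L: "length cs = 2 * k" using assms(1) unfolding k_def by simp
  have "gdist E (cyc m) (cyc k) \<le> k - cycle_dist m"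
  proof (cases "m \<le> k")
    case True
    then show ?thesis using gdist_cyc_le[of m "k - m"] L unfolding cycle_dist_def by simp
  next
    case False
    then have "gdist E (cyc k) (cyc m) \<le> m - k" using gdist_cyc_le[of k "m - k"] by simp
    moreover have "k - cycle_dist m = m - k" using False L assms(2) unfolding cycle_dist_def by simp
    ultimately show ?thesis using gdist_sym[OF cyc_less cyc_less, of m k] by simp
  qed
  moreover have "gdist E (cyc 0) (cyc k) \<le> gdist E (cyc 0) (cyc m) + gdist E (cyc m) (cyc k)"
    using gdist_triangle cyc_less by blast
  moreover have "gdist E (cyc 0) (cyc k) = k" "cycle_dist m \<le> k"
    using gdist_hub_cyc[of k] L length_cycle unfolding cycle_dist_def by auto
  ultimately show ?thesis using gdist_hub_cyc[OF assms(2)] by linarith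
qed

lemma gdist_sq_hub_identity:
  assumes "even (length cs)" "E (cyc 0) t" "t \<notin> set cs" "x < n"
  defines "k \<equiv> length cs div 2"
  shows "real (gdist E x (cyc k))^2 + real k * real (gdist E x t)^2
    - (real k + 1) * real (gdist E x (cyc 0))^2 = real k * (real k + 1)"
proof (cases "x \<in> set cs")
  case True
  then obtain m where m: "m < length cs" "x = cyc m" using cycle_vertex_cyc by blast
  have "cycle_dist m \<le> k" unfolding cycle_dist_def k_def by simp
  then have antipode: "real (gdist E x (cyc k)) = real k - real (cycle_dist m)"
    using gdist_cyc_antipode[OF assms(1) m(1)] m(2) unfolding k_def by simp
  have hub: "real (gdist E x (cyc 0)) = real (cycle_dist m)"
    using gdist_hub_cyc[OF m(1)] gdist_sym[OF cyc_less cyc_less, of m 0] m(2) by simp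
  have "gdist E t x = 1 + cycle_dist m"
    using gdist_via_hub[OF _ assms(3) True] gdist_edge[OF edge_sym[OF assms(2)]]
      gdist_hub_cyc[OF m(1)] edge_less[OF assms(2)] m(2) by simp
  then have off: "real (gdist E x t) = real (cycle_dist m) + 1"
    using gdist_sym[OF assms(4)] edge_less[OF assms(2)] by simp
  have "(real k - c)\<^sup>2 + real k * (c + 1)\<^sup>2 - (real k + 1) * c\<^sup>2 = real k * (real k + 1)"
    for c :: real
    by (simp add: power2_eq_square algebra_simps)
  then show ?thesis unfolding antipode hub off .
next
  case False
  have hub: "real (gdist E x (cyc 0)) = real (gdist E x t) + 1"
    using gdist_off_cycle_hub[OF assms(2-4) False] by simp
  have "gdist E x (cyc k) = gdist E x (cyc 0) + k"
    using gdist_via_hub[OF assms(4) False cyc_in_cycle[of k]] gdist_hub_cyc[of k] length_cycle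
    unfolding k_def cycle_dist_def by simp
  then have antipode: "real (gdist E x (cyc k)) = real (gdist E x t) + 1 + real k"
    using hub by simp
  have "(s + 1 + real k)\<^sup>2 + real k * s\<^sup>2 - (real k + 1) * (s + 1)\<^sup>2 = real k * (real k + 1)"
    for s :: real
    by (simp add: power2_eq_square algebra_simps)
  then show ?thesis unfolding antipode hub .
qed

lemma dist_sq_matrix_singular:
  assumes "even (length cs)" "E (cyc 0) t" "t \<notin> set cs"
    and "w \<notin> set cs" "neighbours w = {a, b}" "a \<noteq> b"
  shows "\<exists>y \<in> carrier_vec n. y \<noteq> 0\<^sub>v n \<and> dist_sq_matrix n E *\<^sub>v y = 0\<^sub>v n"
proof -
  define k where "k = length cs div 2"
  define K where "K = real k"
  define cps where "cps = [(- 2 * (K + 1), cyc 0), (2, cyc k), (2 * K, t),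
    (- K * (K + 1), a), (2 * K * (K + 1), w), (- K * (K + 1), b)]"
  define y where "y = vec n (\<lambda>j. \<Sum>(c, p) \<leftarrow> cps. if j = p then c else 0)"
  have edges: "E w a" "E w b" using assms(5) unfolding neighbours_def by blast+
  have vertices: "\<forall>(c, p) \<in> set cps. p < n"
    using cyc_less edge_less[OF edges(1)] edge_less[OF edges(2)] edge_less[OF assms(2)]
    unfolding cps_def by auto
  have "(dist_sq_matrix n E *\<^sub>v y) $ x = 0" if "x < n" for x
  proof -
    have "(dist_sq_matrix n E *\<^sub>v y) $ x = (\<Sum>(c, p) \<leftarrow> cps. c * real (gdist E x p)^2)"
      using mult_mat_vec_point_combination[of x "dist_sq_matrix n E" cps] vertices that
      unfolding y_def by (simp add: dist_sq_matrix_def cps_def)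
    also have "\<dots> = 2 * (real (gdist E x (cyc k))^2 + K * real (gdist E x t)^2
        - (K + 1) * real (gdist E x (cyc 0))^2)
      - K * (K + 1) * (real (gdist E x a)^2 - 2 * real (gdist E x w)^2 + real (gdist E x b)^2)"
      unfolding cps_def by (simp add: algebra_simps)
    also have "\<dots> = 0"
      using gdist_sq_hub_identity[OF assms(1-3) that]
        gdist_sq_second_difference[OF separates_off_cycle[OF assms(4) edges assms(6)] assms(5) that]
      unfolding K_def k_def by simp
    finally show ?thesis .
  qed
  then have "dist_sq_matrix n E *\<^sub>v y = 0\<^sub>v n"
    by (intro eq_vecI) (simp_all add: dist_sq_matrix_def y_def)
  moreover have "y \<noteq> 0\<^sub>v n"
  proof
    have "a \<notin> set cs \<or> a = cyc 0" "b \<notin> set cs \<or> b = cyc 0"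
      using cycle_closed edge_sym edges assms(4) by blast+
    then have "cyc k \<noteq> cyc 0" "cyc k \<noteq> t" "cyc k \<noteq> a" "cyc k \<noteq> w" "cyc k \<noteq> b"
      using cyc_antipode_ne assms(3,4) unfolding k_def by blast+
    then have "y $ cyc k = 2" unfolding y_def cps_def using cyc_less[of k] by simp
    moreover assume "y = 0\<^sub>v n"
    ultimately show False using cyc_less[of k] by simp
  qed
  ultimately show ?thesis unfolding y_def by auto
qed

end

theorem lemma6p4:
  fixes n :: nat and E :: "nat \<Rightarrow> nat \<Rightarrow> bool" and cs :: "nat list"
  assumes "simple_graph n E"
    and "connected_graph n E"
    and "is_cycle n E cs"
    and "\<forall>cs'. is_cycle n E cs' \<longrightarrow> cycle_edges cs' = cycle_edges cs"
    and "even (length cs)"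
    and "card {v \<in> set cs. degree n E v = 3} = 1"
    and "\<forall>v \<in> set cs. degree n E v = 2 \<or> degree n E v = 3"
    and "\<exists>v<n. v \<notin> set cs \<and> degree n E v = 2"
  shows "i0 (dist_sq_matrix n E) \<ge> 1"
proof -
  obtain v where hub: "{v \<in> set cs. degree n E v = 3} = {v}"
    using assms(6) card_1_singletonE by blast
  then have "v \<in> set cs" by blast
  then obtain h where h: "h < length cs" "cs ! h = v" by (metis in_set_conv_nth)
  have "degree n E y = 2" if "y \<in> set cs" "y \<noteq> cs ! h" for y
  proof -
    have "y \<notin> {v}" using that(2) h(2) by blast
    then have "degree n E y \<noteq> 3" using hub that(1) by blast
    then show ?thesis using assms(7) that(1) by blast
  qed
  moreover have "degree n E (cs ! h) = 3" using hub h(2) by blast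
  ultimately interpret unicyclic_graph_hub n E cs h
    using assms(1-4) h(1) by unfold_locales
  obtain t where t: "E (cyc 0) t" "t \<notin> set cs" using ex_hub_off_cycle_neighbour by blast
  obtain w where w: "w \<notin> set cs" "degree n E w = 2" using assms(8) by blast
  then obtain a b where ab: "neighbours w = {a, b}" "a \<noteq> b"
    unfolding degree_eq_card_neighbours card_2_iff by blast
  obtain y where "y \<in> carrier_vec n" "y \<noteq> 0\<^sub>v n" "dist_sq_matrix n E *\<^sub>v y = 0\<^sub>v n"
    using dist_sq_matrix_singular[OF assms(5) t w(1) ab] by blast
  then show ?thesis by (intro i0_ge_1_if_singular) (simp_all add: dist_sq_matrix_def)
qed

end
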